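(* Let $\Gamma$ be a finitely generated infinite group, $\{\Gamma_n\}_{n\in\mathbb N}$ finite-index normal subgroups, $f\in\mathbb{R}\Gamma$ well-balanced and $g\in\mathbb{R}\Gamma$. There exists $C>0$ such that whenever $\pi_n(g)=h\,\pi_n(f)$ for some $n\in\mathbb{N}$ and $h\in\mathbb{R}(\Gamma/\Gamma_n)$, one has $$\max_{s\Gamma_n\in\Gamma/\Gamma_n}h_{s\Gamma_n}-\min_{s\Gamma_n\in\Gamma/\Gamma_n}h_{s\Gamma_n}\le C.$$
   Context: $f\in\mathbb{R}\Gamma$ is well-balanced if $\sum_sf_s=0$, $f_s\le0$ for $s\ne e$, $f_s=f_{s^{-1}}$, and the support of $f$ generates $\Gamma$. $\pi_n:\mathbb{R}\Gamma\to\mathbb{R}(\Gamma/\Gamma_n)$ is the ring homomorphism induced by the quotient map, $\pi_n(g)_{s\Gamma_n}=\sum_{t\in s\Gamma_n}g_t$; products in $\mathbb{R}(\Gamma/\Gamma_n)$ are convolutions over the finite group $\Gamma/\Gamma_n$. *)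

theory Defs
  imports Complex_Main "HOL-Algebra.Algebra"
begin

(* Elements of the real group ring R[G]: real-valued functions on carrier G
   with finite support, vanishing outside the carrier. *)
definition grp_supp :: "('a, 'b) monoid_scheme \<Rightarrow> ('a \<Rightarrow> real) \<Rightarrow> 'a set" where
  "grp_supp G f = {x \<in> carrier G. f x \<noteq> 0}"

definition in_group_ring :: "('a, 'b) monoid_scheme \<Rightarrow> ('a \<Rightarrow> real) \<Rightarrow> bool" where
  "in_group_ring G f \<longleftrightarrow> finite (grp_supp G f) \<and> (\<forall>x. x \<notin> carrier G \<longrightarrow> f x = 0)"

definition finitely_generated :: "('a, 'b) monoid_scheme \<Rightarrow> bool" where
  "finitely_generated G \<longleftrightarrow> (\<exists>S. finite S \<and> S \<subseteq> carrier G \<and> generate G S = carrier G)"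

definition well_balanced :: "('a, 'b) monoid_scheme \<Rightarrow> ('a \<Rightarrow> real) \<Rightarrow> bool" where
  "well_balanced G f \<longleftrightarrow>
     in_group_ring G f \<and>
     (\<Sum>s\<in>grp_supp G f. f s) = 0 \<and>
     (\<forall>s\<in>carrier G. s \<noteq> \<one>\<^bsub>G\<^esub> \<longrightarrow> f s \<le> 0) \<and>
     (\<forall>s\<in>carrier G. f s = f (inv\<^bsub>G\<^esub> s)) \<and>
     generate G (grp_supp G f) = carrier G"

(* pi_N(g)_{sN} = sum_{t in sN} g_t  (finite sum over the support) *)
definition quot_proj :: "('a, 'b) monoid_scheme \<Rightarrow> 'a set \<Rightarrow> ('a \<Rightarrow> real) \<Rightarrow> 'a set \<Rightarrow> real" where
  "quot_proj G N g c = (\<Sum>t\<in>c \<inter> grp_supp G g. g t)"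

definition quot_conv :: "('a, 'b) monoid_scheme \<Rightarrow> 'a set \<Rightarrow> ('a set \<Rightarrow> real) \<Rightarrow> ('a set \<Rightarrow> real) \<Rightarrow> 'a set \<Rightarrow> real" where
  "quot_conv G N h k c =
     (\<Sum>d\<in>carrier (G Mod N). h d * k (inv\<^bsub>G Mod N\<^esub> d \<otimes>\<^bsub>G Mod N\<^esub> c))"

end

theory Submission
  imports Defs
begin

text \<open>
  Write k for the projection of f to a finite quotient Q = G/N and suppose
  pi(g) = h * k.  Then k is a symmetric kernel of total mass zero which is nonpositive
  away from the identity, so h * k is a discrete Laplacian-type operator applied to h.
  Three facts about such convolutions on a finite group drive the argument:
  (1) a cut formula, which bounds every edge weight times the jump of h along the edge by
      the l1-norm of pi(g), hence by the l1-norm of g;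
  (2) a pointwise maximum principle: at a maximum of h where h * k vanishes, all edges
      to strictly smaller values carry zero weight;
  (3) since the support of f generates G, a subset of G closed under right
      multiplication by the support (and its inverses) is all of G.
  From (1), the function a \<mapsto> h(Na) is Lipschitz along generators from the support of f
  with a constant independent of N; from (2) and (3), a nonconstant h attains its maximum
  and its minimum on cosets of points of the support of g.  Pairs of such points are
  joined by words of bounded length in the generators, which bounds max h - min h
  uniformly in N.
\<close>

text \<open>Convolution on a group, so that the convolution on the quotient is an instance.\<close>

definition convolution :: "('a, 'b) monoid_scheme \<Rightarrow> ('a \<Rightarrow> real) \<Rightarrow> ('a \<Rightarrow> real) \<Rightarrow> 'a \<Rightarrow> real" where
  "convolution G h k c = (\<Sum>d\<in>carrier G. h d * k (inv\<^bsub>G\<^esub> d \<otimes>\<^bsub>G\<^esub> c))"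

lemma quot_conv_eq_convolution: "quot_conv G N h k = convolution (G Mod N) h k"
  by (simp add: fun_eq_iff quot_conv_def convolution_def)

text \<open>Convolution and projection commute with negation; used to pass from maxima to minima.\<close>

lemma convolution_uminus: "convolution G (\<lambda>x. - h x) k c = - convolution G h k c"
  unfolding convolution_def by (simp add: sum_negf)

lemma quot_proj_uminus: "quot_proj G N (\<lambda>x. - g x) c = - quot_proj G N g c"
  unfolding quot_proj_def grp_supp_def by (simp add: sum_negf)

context group begin

text \<open>The edge from d to c carries the kernel weight k (inv d \<otimes> c); it sits at the
  identity exactly for loops.\<close>

lemma inv_mult_eq_one_iff:
  "c \<in> carrier G \<Longrightarrow> d \<in> carrier G \<Longrightarrow> inv d \<otimes> c = \<one> \<longleftrightarrow> c = d"
  by (simp add: inv_solve_left')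

lemma sum_kernel_shift:
  assumes c: "c \<in> carrier G"
  shows "(\<Sum>d\<in>carrier G. k (inv d \<otimes> c)) = (\<Sum>x\<in>carrier G. k x)"
proof -
  have "bij_betw (\<lambda>d. inv d \<otimes> c) (carrier G) (carrier G)"
    by (rule bij_betw_byWitness[where f'="\<lambda>x. c \<otimes> inv x"])
      (use c in \<open>auto simp: inv_mult_group m_assoc, simp flip: m_assoc\<close>)
  then show ?thesis by (rule sum.reindex_bij_betw)
qed

lemma convolution_as_differences:
  fixes k h :: "'a \<Rightarrow> real"
  assumes s0: "(\<Sum>x\<in>carrier G. k x) = 0" and c: "c \<in> carrier G"
  shows "convolution G h k c = (\<Sum>d\<in>carrier G. k (inv d \<otimes> c) * (h d - h c))"
proof -
  have "(\<Sum>d\<in>carrier G. k (inv d \<otimes> c) * (h d - h c)) =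
      convolution G h k c - h c * (\<Sum>d\<in>carrier G. k (inv d \<otimes> c))"
    by (simp add: convolution_def algebra_simps sum_subtractf sum_distrib_left)
  then show ?thesis using sum_kernel_shift[OF c, of k] s0 by simp
qed

lemma convolution_cut_formula:
  fixes k h :: "'a \<Rightarrow> real"
  assumes fin: "finite (carrier G)" and s0: "(\<Sum>x\<in>carrier G. k x) = 0"
    and sym: "\<forall>x\<in>carrier G. k (inv x) = k x" and U: "U \<subseteq> carrier G"
  shows "(\<Sum>c\<in>U. convolution G h k c)
       = (\<Sum>c\<in>U. \<Sum>d\<in>carrier G - U. k (inv d \<otimes> c) * (h d - h c))"
proof -
  define T where "T = (\<lambda>c d. k (inv d \<otimes> c) * (h d - h c))"
  have antisym: "T c d = - T d c" if "c \<in> U" "d \<in> U" for c d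
  proof -
    have cd: "c \<in> carrier G" "d \<in> carrier G" using that U by auto
    then have "k (inv d \<otimes> c) = k (inv c \<otimes> d)"
      using sym[rule_format, of "inv c \<otimes> d"] by (simp add: inv_mult_group)
    then show ?thesis unfolding T_def by (simp add: algebra_simps)
  qed
  have inner: "(\<Sum>c\<in>U. \<Sum>d\<in>U. T c d) = 0"
  proof -
    have "(\<Sum>c\<in>U. \<Sum>d\<in>U. T c d) = (\<Sum>d\<in>U. \<Sum>c\<in>U. T c d)" by (rule sum.swap)
    also have "\<dots> = (\<Sum>d\<in>U. \<Sum>c\<in>U. - T d c)"
      using antisym by (intro sum.cong refl)
    also have "\<dots> = - (\<Sum>d\<in>U. \<Sum>c\<in>U. T d c)" by (simp add: sum_negf)
    finally show ?thesis by simp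
  qed
  have "(\<Sum>c\<in>U. convolution G h k c) = (\<Sum>c\<in>U. \<Sum>d\<in>carrier G. T c d)"
    unfolding T_def using U by (intro sum.cong refl convolution_as_differences[OF s0]) auto
  also have "\<dots> = (\<Sum>c\<in>U. \<Sum>d\<in>U. T c d) + (\<Sum>c\<in>U. \<Sum>d\<in>carrier G - U. T c d)"
    by (simp add: sum.subset_diff[OF U fin] sum.distrib)
  finally show ?thesis using inner unfolding T_def by simp
qed

text \<open>The cut formula for the superlevel set U = {h > h b} gives this when h b < h a.\<close>

lemma convolution_edge_bound_ordered:
  fixes k h :: "'a \<Rightarrow> real"
  assumes fin: "finite (carrier G)" and s0: "(\<Sum>x\<in>carrier G. k x) = 0"
    and sym: "\<forall>x\<in>carrier G. k (inv x) = k x"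
    and np: "\<forall>x\<in>carrier G. x \<noteq> \<one> \<longrightarrow> k x \<le> 0"
    and ab: "a \<in> carrier G" "b \<in> carrier G" "h b < h a"
  shows "- k (inv b \<otimes> a) * (h a - h b) \<le> (\<Sum>c\<in>carrier G. \<bar>convolution G h k c\<bar>)"
proof -
  define U where "U = {c\<in>carrier G. h b < h c}"
  have U: "U \<subseteq> carrier G" unfolding U_def by auto
  define T where "T = (\<lambda>c d. k (inv d \<otimes> c) * (h d - h c))"
  have T_nonneg: "0 \<le> T c d" if "c \<in> U" "d \<in> carrier G - U" for c d
  proof -
    have c: "c \<in> carrier G" "h b < h c" and d: "d \<in> carrier G" "h d \<le> h b"
      using that unfolding U_def by auto
    then have "inv d \<otimes> c \<noteq> \<one>" by (auto simp: inv_mult_eq_one_iff)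
    then have "k (inv d \<otimes> c) \<le> 0" using np c d by auto
    then show ?thesis unfolding T_def using c d by (intro mult_nonpos_nonpos) auto
  qed
  have aU: "a \<in> U" and bU: "b \<in> carrier G - U" using ab unfolding U_def by auto
  have "T a b \<le> (\<Sum>d\<in>carrier G - U. T a d)"
    using fin bU T_nonneg[OF aU] by (intro member_le_sum) auto
  also have "\<dots> \<le> (\<Sum>c\<in>U. \<Sum>d\<in>carrier G - U. T c d)"
    using fin U aU T_nonneg
    by (intro member_le_sum[where f="\<lambda>c. \<Sum>d\<in>carrier G - U. T c d"] sum_nonneg)
      (auto intro: finite_subset)
  also have "\<dots> = (\<Sum>c\<in>U. convolution G h k c)"
    unfolding T_def using convolution_cut_formula[OF fin s0 sym U] by simp
  also have "\<dots> \<le> (\<Sum>c\<in>U. \<bar>convolution G h k c\<bar>)" by (intro sum_mono) auto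
  also have "\<dots> \<le> (\<Sum>c\<in>carrier G. \<bar>convolution G h k c\<bar>)" using fin U by (intro sum_mono2) auto
  finally show ?thesis unfolding T_def by (simp add: algebra_simps)
qed

lemma convolution_edge_bound:
  fixes k h :: "'a \<Rightarrow> real"
  assumes fin: "finite (carrier G)" and s0: "(\<Sum>x\<in>carrier G. k x) = 0"
    and sym: "\<forall>x\<in>carrier G. k (inv x) = k x"
    and np: "\<forall>x\<in>carrier G. x \<noteq> \<one> \<longrightarrow> k x \<le> 0"
    and ab: "a \<in> carrier G" "b \<in> carrier G"
  shows "- k (inv b \<otimes> a) * \<bar>h a - h b\<bar> \<le> (\<Sum>c\<in>carrier G. \<bar>convolution G h k c\<bar>)"
proof -
  have swap: "k (inv a \<otimes> b) = k (inv b \<otimes> a)"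
    using sym[rule_format, of "inv b \<otimes> a"] ab by (simp add: inv_mult_group)
  consider "h b < h a" | "h a < h b" | "h a = h b" by linarith
  then show ?thesis
  proof cases
    case 1
    then show ?thesis using convolution_edge_bound_ordered[OF assms] by simp
  next
    case 2
    then show ?thesis using convolution_edge_bound_ordered[OF fin s0 sym np ab(2,1)] swap by simp
  qed (simp add: sum_nonneg)
qed

lemma convolution_max_principle:
  fixes k h :: "'a \<Rightarrow> real"
  assumes fin: "finite (carrier G)" and s0: "(\<Sum>x\<in>carrier G. k x) = 0"
    and np: "\<forall>x\<in>carrier G. x \<noteq> \<one> \<longrightarrow> k x \<le> 0"
    and M: "\<forall>x\<in>carrier G. h x \<le> h c" and c: "c \<in> carrier G"
    and zero: "convolution G h k c = 0"
    and d: "d \<in> carrier G" "h d < h c"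
  shows "k (inv d \<otimes> c) = 0"
proof -
  define T where "T = (\<lambda>d. k (inv d \<otimes> c) * (h d - h c))"
  have T_nonneg: "0 \<le> T x" if x: "x \<in> carrier G" for x
  proof (cases "x = c")
    case False
    then have "inv x \<otimes> c \<noteq> \<one>" using c x by (simp add: inv_mult_eq_one_iff)
    then have "k (inv x \<otimes> c) \<le> 0" using np c x by auto
    then show ?thesis unfolding T_def using M x by (intro mult_nonpos_nonpos) auto
  qed (simp add: T_def)
  have "(\<Sum>x\<in>carrier G. T x) = 0"
    using zero convolution_as_differences[OF s0 c] unfolding T_def by simp
  then have "T d = 0" using sum_nonneg_eq_0_iff[OF fin] T_nonneg d by blast
  then show ?thesis unfolding T_def using d by simp
qed

end

definition right_lipschitz :: "('a, 'b) monoid_scheme \<Rightarrow> 'a set \<Rightarrow> real \<Rightarrow> ('a \<Rightarrow> real) \<Rightarrow> bool" where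
  "right_lipschitz G S L F \<longleftrightarrow> (\<forall>a\<in>carrier G. \<forall>y\<in>S. \<bar>F a - F (a \<otimes>\<^bsub>G\<^esub> y)\<bar> \<le> L)"

context group begin

lemma word_length_bound:
  assumes "x \<in> generate G S" and S: "S \<subseteq> carrier G"
  shows "\<exists>m::nat. \<forall>F L. right_lipschitz G S L F \<longrightarrow> (\<forall>a\<in>carrier G. \<bar>F a - F (a \<otimes> x)\<bar> \<le> real m * L)"
  using assms(1)
proof (induction x rule: generate.induct)
  case one
  show ?case by (intro exI[of _ 0]) auto
next
  case (incl y)
  then show ?case unfolding right_lipschitz_def by (intro exI[of _ 1]) simp
next
  case (inv y)
  have y: "y \<in> carrier G" using inv S by auto
  show ?case
  proof (intro exI[of _ 1] allI impI ballI)
    fix F :: "'a \<Rightarrow> real" and L a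
    assume lip: "right_lipschitz G S L F" and a: "a \<in> carrier G"
    have "\<bar>F (a \<otimes> inv y) - F (a \<otimes> inv y \<otimes> y)\<bar> \<le> L"
      using lip inv.hyps a y unfolding right_lipschitz_def by simp
    moreover have "a \<otimes> inv y \<otimes> y = a" using a y by (simp add: m_assoc)
    ultimately show "\<bar>F a - F (a \<otimes> inv y)\<bar> \<le> real 1 * L" by simp
  qed
next
  case (eng x1 x2)
  obtain m1 :: nat where
    m1: "\<forall>F L. right_lipschitz G S L F \<longrightarrow> (\<forall>a\<in>carrier G. \<bar>F a - F (a \<otimes> x1)\<bar> \<le> real m1 * L)"
    using eng.IH(1) by blast
  obtain m2 :: nat where
    m2: "\<forall>F L. right_lipschitz G S L F \<longrightarrow> (\<forall>a\<in>carrier G. \<bar>F a - F (a \<otimes> x2)\<bar> \<le> real m2 * L)"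
    using eng.IH(2) by blast
  have x: "x1 \<in> carrier G" "x2 \<in> carrier G" using eng.hyps generate_in_carrier S by auto
  show ?case
  proof (intro exI[of _ "m1 + m2"] allI impI ballI)
    fix F :: "'a \<Rightarrow> real" and L a
    assume lip: "right_lipschitz G S L F" and a: "a \<in> carrier G"
    have "\<bar>F a - F (a \<otimes> x1)\<bar> \<le> real m1 * L" using m1 lip a by simp
    moreover have "\<bar>F (a \<otimes> x1) - F (a \<otimes> x1 \<otimes> x2)\<bar> \<le> real m2 * L" using m2 lip a x by simp
    moreover have "a \<otimes> x1 \<otimes> x2 = a \<otimes> (x1 \<otimes> x2)" using a x by (simp add: m_assoc)
    ultimately show "\<bar>F a - F (a \<otimes> (x1 \<otimes> x2))\<bar> \<le> real (m1 + m2) * L"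
      by (simp add: algebra_simps)
  qed
qed

lemma uniform_word_length_bound:
  assumes W: "finite W" "W \<subseteq> generate G S" and S: "S \<subseteq> carrier G"
  shows "\<exists>m::nat. \<forall>F L. 0 \<le> L \<longrightarrow> right_lipschitz G S L F \<longrightarrow>
           (\<forall>x\<in>W. \<forall>a\<in>carrier G. \<bar>F a - F (a \<otimes> x)\<bar> \<le> real m * L)"
  using W
proof (induction W rule: finite_induct)
  case empty
  show ?case by simp
next
  case (insert x W)
  then obtain m :: nat where m: "\<And>F L y a. 0 \<le> L \<Longrightarrow> right_lipschitz G S L F \<Longrightarrow> y \<in> W \<Longrightarrow>
      a \<in> carrier G \<Longrightarrow> \<bar>F a - F (a \<otimes> y)\<bar> \<le> real m * L" by blast
  obtain mx :: nat where mx: "\<And>F L a. right_lipschitz G S L F \<Longrightarrow> a \<in> carrier G \<Longrightarrow>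
      \<bar>F a - F (a \<otimes> x)\<bar> \<le> real mx * L"
    using word_length_bound[OF _ S, of x] insert.prems by blast
  show ?case
  proof (intro exI[of _ "m + mx"] allI impI ballI)
    fix F :: "'a \<Rightarrow> real" and L y a
    assume L: "0 \<le> L" and lip: "right_lipschitz G S L F"
      and y: "y \<in> insert x W" and a: "a \<in> carrier G"
    have "\<bar>F a - F (a \<otimes> y)\<bar> \<le> real m * L \<or> \<bar>F a - F (a \<otimes> y)\<bar> \<le> real mx * L"
      using y m[OF L lip _ a] mx[OF lip a] by blast
    moreover have "real m * L \<le> real (m + mx) * L" "real mx * L \<le> real (m + mx) * L"
      using L by (simp_all add: mult_right_mono)
    ultimately show "\<bar>F a - F (a \<otimes> y)\<bar> \<le> real (m + mx) * L" by linarith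
  qed
qed

lemma pairwise_word_length_bound:
  assumes B: "finite B" "B \<subseteq> carrier G" and gen: "generate G S = carrier G"
    and S: "S \<subseteq> carrier G"
  shows "\<exists>m::nat. \<forall>F L. 0 \<le> L \<longrightarrow> right_lipschitz G S L F \<longrightarrow>
           (\<forall>b1\<in>B. \<forall>b2\<in>B. F b1 - F b2 \<le> real m * L)"
proof -
  define W where "W = (\<lambda>(b1, b2). inv b1 \<otimes> b2) ` (B \<times> B)"
  have W: "finite W" "W \<subseteq> generate G S" unfolding W_def gen using B by auto
  obtain m :: nat where m: "\<forall>F L. 0 \<le> L \<longrightarrow> right_lipschitz G S L F \<longrightarrow>
      (\<forall>x\<in>W. \<forall>a\<in>carrier G. \<bar>F a - F (a \<otimes> x)\<bar> \<le> real m * L)"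
    using uniform_word_length_bound[OF W S] by blast
  have "F b1 - F b2 \<le> real m * L"
    if L: "0 \<le> L" and lip: "right_lipschitz G S L F" and b: "b1 \<in> B" "b2 \<in> B" for F L b1 b2
  proof -
    have b_carr: "b1 \<in> carrier G" "b2 \<in> carrier G" using b B by auto
    have "inv b1 \<otimes> b2 \<in> W" unfolding W_def using b by auto
    then have "\<bar>F b1 - F (b1 \<otimes> (inv b1 \<otimes> b2))\<bar> \<le> real m * L"
      using m[rule_format, OF L lip] b_carr by blast
    then show ?thesis using b_carr by (simp add: m_assoc[symmetric])
  qed
  then show ?thesis by blast
qed

lemma right_closed_subset_eq:
  assumes gen: "generate G S = carrier G" and S: "S \<subseteq> carrier G"
    and A: "A \<subseteq> carrier G" "a0 \<in> A"
    and closed: "\<And>a y. a \<in> A \<Longrightarrow> y \<in> S \<Longrightarrow> a \<otimes> y \<in> A"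
    and closed_inv: "\<And>a y. a \<in> A \<Longrightarrow> y \<in> S \<Longrightarrow> a \<otimes> inv y \<in> A"
  shows "A = carrier G"
proof -
  have right_mult: "a \<otimes> x \<in> A" if "x \<in> generate G S" "a \<in> A" for x a
    using that
  proof (induction x arbitrary: a rule: generate.induct)
    case one
    then show ?case using A by auto
  next
    case (eng x1 x2)
    have "x1 \<in> carrier G" "x2 \<in> carrier G" using eng.hyps generate_in_carrier S by auto
    then show ?case using eng A by (auto simp flip: m_assoc)
  qed (use closed closed_inv in auto)
  have "b \<in> A" if b: "b \<in> carrier G" for b
  proof -
    have a0: "a0 \<in> carrier G" using A by auto
    have "a0 \<otimes> (inv a0 \<otimes> b) \<in> A" using right_mult[of "inv a0 \<otimes> b" a0] gen a0 b A by simp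
    then show ?thesis using a0 b by (simp flip: m_assoc)
  qed
  then show ?thesis using A by auto
qed

end

lemma supp_subset_carrier: "grp_supp G u \<subseteq> carrier G"
  unfolding grp_supp_def by auto

lemma well_balanced_in_group_ring: "well_balanced G f \<Longrightarrow> in_group_ring G f"
  unfolding well_balanced_def by blast

lemma well_balanced_supp_finite: "well_balanced G f \<Longrightarrow> finite (grp_supp G f)"
  unfolding well_balanced_def in_group_ring_def by blast

lemma well_balanced_nonpos:
  "well_balanced G f \<Longrightarrow> s \<in> carrier G \<Longrightarrow> s \<noteq> \<one>\<^bsub>G\<^esub> \<Longrightarrow> f s \<le> 0"
  unfolding well_balanced_def by blast

lemma well_balanced_symmetric:
  "well_balanced G f \<Longrightarrow> s \<in> carrier G \<Longrightarrow> f (inv\<^bsub>G\<^esub> s) = f s"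
  unfolding well_balanced_def by metis

lemma well_balanced_sum_zero: "well_balanced G f \<Longrightarrow> (\<Sum>s\<in>grp_supp G f. f s) = 0"
  unfolding well_balanced_def by blast

lemma well_balanced_generates: "well_balanced G f \<Longrightarrow> generate G (grp_supp G f) = carrier G"
  unfolding well_balanced_def by blast

lemma well_balanced_supp_neg:
  "well_balanced G f \<Longrightarrow> y \<in> grp_supp G f \<Longrightarrow> y \<noteq> \<one>\<^bsub>G\<^esub> \<Longrightarrow> f y < 0"
  using well_balanced_nonpos unfolding grp_supp_def by force

lemma finite_positive_lower_bound:
  fixes u :: "'a \<Rightarrow> real"
  assumes "finite S" "\<forall>y\<in>S. 0 < u y"
  shows "\<exists>w>0. \<forall>y\<in>S. w \<le> u y"
proof -
  define w where "w = Min (insert 1 (u ` S))"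
  have "0 < w" unfolding w_def using assms by (subst Min_gr_iff) auto
  moreover have "\<forall>y\<in>S. w \<le> u y" unfolding w_def using assms by (auto intro: Min_le)
  ultimately show ?thesis by blast
qed

lemma well_balanced_gap:
  assumes "well_balanced G f"
  shows "\<exists>w>0. \<forall>y\<in>grp_supp G f. y \<noteq> \<one>\<^bsub>G\<^esub> \<longrightarrow> f y \<le> - w"
  using finite_positive_lower_bound[of "grp_supp G f - {\<one>\<^bsub>G\<^esub>}" "\<lambda>y. - f y"]
    well_balanced_supp_finite[OF assms] well_balanced_supp_neg[OF assms] by force

context normal begin

lemma quotient_inv:
  assumes "x \<in> carrier G" shows "inv\<^bsub>G Mod H\<^esub> (H #> x) = H #> inv x"
proof -
  have "H #> x \<in> carrier (G Mod H)" using assms by (simp add: carrier_FactGroup)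
  then show ?thesis using inv_FactGroup rcos_inv assms by simp
qed

lemma coset_subset_carrier: "c \<in> carrier (G Mod H) \<Longrightarrow> c \<subseteq> carrier G"
  using r_coset_subset_G subset by (auto simp: carrier_FactGroup)

lemma coset_eq_if_mem: "a \<in> carrier G \<Longrightarrow> t \<in> H #> a \<Longrightarrow> H #> t = H #> a"
  using repr_independence subgroup_axioms by metis

lemma coset_eq_subgroup_iff: "a \<in> carrier G \<Longrightarrow> H #> a = H \<longleftrightarrow> a \<in> H"
  using coset_join2 rcos_self subgroup_axioms by metis

end

text \<open>A finite quotient G/N together with a well-balanced f; inside this locale k is the
  projection quot_proj G N f.\<close>

locale balanced_quotient = normal N G for N and G (structure) +
  fixes f :: "'a \<Rightarrow> real"
  assumes finite_quotient: "finite (carrier (G Mod N))"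
    and balanced: "well_balanced G f"
begin

lemmas f_in_group_ring = well_balanced_in_group_ring[OF balanced]
  and f_nonpos = well_balanced_nonpos[OF balanced]
  and f_symmetric = well_balanced_symmetric[OF balanced]
  and f_sum_zero = well_balanced_sum_zero[OF balanced]
  and f_generates = well_balanced_generates[OF balanced]
  and supp_f_finite = well_balanced_supp_finite[OF balanced]
  and supp_f_neg = well_balanced_supp_neg[OF balanced]

lemma supp_f_inv: "t \<in> grp_supp G f \<Longrightarrow> inv t \<in> grp_supp G f"
  using f_symmetric unfolding grp_supp_def by auto

lemma sum_over_cosets:
  assumes u: "in_group_ring G u"
  shows "(\<Sum>c\<in>carrier (G Mod N). \<Sum>t\<in>c \<inter> grp_supp G u. v t) = (\<Sum>t\<in>grp_supp G u. v t)"
proof -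
  have fin: "finite (grp_supp G u)" using u unfolding in_group_ring_def by blast
  have "grp_supp G u = (\<Union>c\<in>carrier (G Mod N). c \<inter> grp_supp G u)"
    using rcosets_part_G[OF subgroup_axioms] supp_subset_carrier[of G u]
    by (auto simp: FactGroup_def)
  moreover have "(\<Sum>t\<in>(\<Union>c\<in>carrier (G Mod N). c \<inter> grp_supp G u). v t)
      = (\<Sum>c\<in>carrier (G Mod N). \<Sum>t\<in>c \<inter> grp_supp G u. v t)"
  proof (rule sum.UNION_disjoint[OF finite_quotient])
    show "\<forall>c\<in>carrier (G Mod N). finite (c \<inter> grp_supp G u)" using fin by auto
    show "\<forall>c\<in>carrier (G Mod N). \<forall>d\<in>carrier (G Mod N). c \<noteq> d \<longrightarrow>
        c \<inter> grp_supp G u \<inter> (d \<inter> grp_supp G u) = {}"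
      using rcos_disjoint[OF subgroup_axioms] unfolding FactGroup_def pairwise_def disjnt_def
      by auto
  qed
  ultimately show ?thesis by simp
qed

lemma kernel_sum_zero: "(\<Sum>c\<in>carrier (G Mod N). quot_proj G N f c) = 0"
  using sum_over_cosets[OF f_in_group_ring, of f] f_sum_zero unfolding quot_proj_def by simp

lemma kernel_symmetric:
  assumes c: "c \<in> carrier (G Mod N)"
  shows "quot_proj G N f (inv\<^bsub>G Mod N\<^esub> c) = quot_proj G N f c"
proof -
  have inv_c: "inv\<^bsub>G Mod N\<^esub> c = (\<lambda>x. inv x) ` c"
    using inv_FactGroup[OF c] unfolding SET_INV_def by auto
  have c_sub: "c \<subseteq> carrier G" using coset_subset_carrier[OF c] .
  have inj: "inj_on (\<lambda>x. inv x) (c \<inter> grp_supp G f)"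
    using inv_inj c_sub by (meson inj_on_subset inf.coboundedI1)
  have image_eq: "(\<lambda>x. inv x) ` c \<inter> grp_supp G f = (\<lambda>x. inv x) ` (c \<inter> grp_supp G f)"
  proof
    show "(\<lambda>x. inv x) ` c \<inter> grp_supp G f \<subseteq> (\<lambda>x. inv x) ` (c \<inter> grp_supp G f)"
    proof
      fix x assume "x \<in> (\<lambda>x. inv x) ` c \<inter> grp_supp G f"
      then obtain t where t: "t \<in> c" "x = inv t" "x \<in> grp_supp G f" by auto
      then have "t \<in> grp_supp G f" using supp_f_inv[OF t(3)] c_sub by auto
      then show "x \<in> (\<lambda>x. inv x) ` (c \<inter> grp_supp G f)" using t by auto
    qed
  qed (use supp_f_inv in auto)
  show ?thesis
    unfolding quot_proj_def inv_c image_eq sum.reindex[OF inj] using f_symmetric c_sub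
    by (intro sum.cong) auto
qed

text \<open>Cosets other than N avoid the identity, the only point where f may be positive.\<close>

lemma one_notin_coset:
  assumes c: "c \<in> carrier (G Mod N)" "c \<noteq> N"
  shows "\<one> \<notin> c"
proof
  assume "\<one> \<in> c"
  moreover obtain a where a: "a \<in> carrier G" "c = N #> a" using c(1) by (auto simp: carrier_FactGroup)
  ultimately have "N #> \<one> = c" using coset_eq_if_mem by simp
  moreover have "N #> \<one> = N" using coset_eq_subgroup_iff by simp
  ultimately show False using c(2) by simp
qed

lemma kernel_nonpos:
  assumes c: "c \<in> carrier (G Mod N)" "c \<noteq> N"
  shows "quot_proj G N f c \<le> 0"
  unfolding quot_proj_def using f_nonpos one_notin_coset[OF c] coset_subset_carrier[OF c(1)]
  by (intro sum_nonpos) blast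

lemma kernel_le_member:
  assumes c: "c \<in> carrier (G Mod N)" "c \<noteq> N" and x: "x \<in> c"
  shows "quot_proj G N f c \<le> f x"
proof (cases "x \<in> grp_supp G f")
  case True
  have fin: "finite (c \<inter> grp_supp G f)" using supp_f_finite by simp
  have "quot_proj G N f c = f x + (\<Sum>t\<in>c \<inter> grp_supp G f - {x}. f t)"
    unfolding quot_proj_def using sum.remove[OF fin, of x f] True x by blast
  also have "\<dots> \<le> f x"
    using f_nonpos one_notin_coset[OF c] coset_subset_carrier[OF c(1)]
    by (intro add_decreasing2 sum_nonpos) blast+
  finally show ?thesis .
next
  case False
  then have "f x = 0" using x coset_subset_carrier[OF c(1)] unfolding grp_supp_def by auto
  then show ?thesis using kernel_nonpos[OF c] by simp
qed

lemma kernel_edge: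
  assumes a: "a \<in> carrier G" and y: "y \<in> grp_supp G f"
    and moves: "N #> (a \<otimes> y) \<noteq> N #> a"
  shows "quot_proj G N f (inv\<^bsub>G Mod N\<^esub> (N #> (a \<otimes> y)) \<otimes>\<^bsub>G Mod N\<^esub> (N #> a)) \<le> f y"
proof -
  have y_carr: "y \<in> carrier G" using y supp_subset_carrier[of G] by auto
  have edge: "inv\<^bsub>G Mod N\<^esub> (N #> (a \<otimes> y)) \<otimes>\<^bsub>G Mod N\<^esub> (N #> a) = N #> inv y"
    using a y_carr by (simp add: quotient_inv rcos_sum inv_mult_group m_assoc)
  have "N #> inv y \<noteq> N"
  proof
    assume "N #> inv y = N"
    then have "inv y \<in> N" using coset_eq_subgroup_iff y_carr by simp
    then have "y \<in> N" using y_carr by (metis inv_inv m_inv_closed)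
    then have "N #> y = N #> \<one>"
      using coset_eq_subgroup_iff[OF y_carr] coset_eq_subgroup_iff[OF one_closed] by simp
    then have "N #> (a \<otimes> y) = N #> a"
      using rcos_sum[OF a y_carr] rcos_sum[OF a one_closed] a by simp
    then show False using moves by contradiction
  qed
  moreover have "inv y \<in> N #> inv y" using rcos_self y_carr subgroup_axioms by simp
  moreover have "N #> inv y \<in> carrier (G Mod N)" using y_carr by (simp add: carrier_FactGroup)
  ultimately have "quot_proj G N f (N #> inv y) \<le> f (inv y)" using kernel_le_member by blast
  then show ?thesis using edge f_symmetric y_carr by simp
qed

lemma quot_proj_l1_bound:
  assumes g: "in_group_ring G g"
  shows "(\<Sum>c\<in>carrier (G Mod N). \<bar>quot_proj G N g c\<bar>) \<le> (\<Sum>t\<in>grp_supp G g. \<bar>g t\<bar>)"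
proof -
  have "(\<Sum>c\<in>carrier (G Mod N). \<bar>quot_proj G N g c\<bar>)
      \<le> (\<Sum>c\<in>carrier (G Mod N). \<Sum>t\<in>c \<inter> grp_supp G g. \<bar>g t\<bar>)"
    unfolding quot_proj_def by (intro sum_mono sum_abs)
  also have "\<dots> = (\<Sum>t\<in>grp_supp G g. \<bar>g t\<bar>)" using sum_over_cosets[OF g] .
  finally show ?thesis .
qed

lemma quot_proj_nonzero_coset:
  assumes c: "c \<in> carrier (G Mod N)" and nz: "quot_proj G N g c \<noteq> 0"
  shows "\<exists>b\<in>grp_supp G g. c = N #> b"
proof -
  obtain t where t: "t \<in> c" "t \<in> grp_supp G g" using nz unfolding quot_proj_def
    by (metis IntE equals0I sum.empty)
  obtain a where a: "a \<in> carrier G" "c = N #> a" using c by (auto simp: carrier_FactGroup)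
  show ?thesis using coset_eq_if_mem[OF a(1)] t a by auto
qed

lemma kernel_hypotheses:
  "(\<Sum>x\<in>carrier (G Mod N). quot_proj G N f x) = 0"
  "\<forall>x\<in>carrier (G Mod N). quot_proj G N f (inv\<^bsub>G Mod N\<^esub> x) = quot_proj G N f x"
  "\<forall>x\<in>carrier (G Mod N). x \<noteq> \<one>\<^bsub>G Mod N\<^esub> \<longrightarrow> quot_proj G N f x \<le> 0"
  using kernel_sum_zero kernel_symmetric kernel_nonpos by auto

text \<open>The bound does not depend on the quotient.\<close>

lemma coset_function_lipschitz:
  assumes g: "in_group_ring G g"
    and eqn: "\<forall>c\<in>carrier (G Mod N). quot_proj G N g c = quot_conv G N h (quot_proj G N f) c"
    and w: "w > 0" "\<forall>y\<in>grp_supp G f. y \<noteq> \<one> \<longrightarrow> f y \<le> - w"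
  shows "right_lipschitz G (grp_supp G f) ((\<Sum>t\<in>grp_supp G g. \<bar>g t\<bar>) / w) (\<lambda>a. h (N #> a))"
  unfolding right_lipschitz_def
proof (intro ballI)
  fix a y assume a: "a \<in> carrier G" and y: "y \<in> grp_supp G f"
  define A where "A = N #> a"
  define B where "B = N #> (a \<otimes> y)"
  have y_carr: "y \<in> carrier G" using y supp_subset_carrier[of G] by auto
  have AB: "A \<in> carrier (G Mod N)" "B \<in> carrier (G Mod N)"
    unfolding A_def B_def using a y_carr by (auto simp: carrier_FactGroup)
  have "w * \<bar>h A - h B\<bar> \<le> (\<Sum>t\<in>grp_supp G g. \<bar>g t\<bar>)"
  proof (cases "A = B")
    case True
    then show ?thesis by (simp add: sum_nonneg)
  next
    case False
    then have "y \<noteq> \<one>" unfolding A_def B_def using a by auto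
    then have "quot_proj G N f (inv\<^bsub>G Mod N\<^esub> B \<otimes>\<^bsub>G Mod N\<^esub> A) \<le> - w"
      using kernel_edge[OF a y] False w(2) y unfolding A_def B_def by fastforce
    then have "w * \<bar>h A - h B\<bar> \<le> - quot_proj G N f (inv\<^bsub>G Mod N\<^esub> B \<otimes>\<^bsub>G Mod N\<^esub> A) * \<bar>h A - h B\<bar>"
      by (intro mult_right_mono) auto
    also have "\<dots> \<le> (\<Sum>c\<in>carrier (G Mod N). \<bar>convolution (G Mod N) h (quot_proj G N f) c\<bar>)"
      using group.convolution_edge_bound[OF factorgroup_is_group finite_quotient kernel_hypotheses AB] .
    also have "\<dots> = (\<Sum>c\<in>carrier (G Mod N). \<bar>quot_proj G N g c\<bar>)"
      using eqn by (simp add: quot_conv_eq_convolution)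
    also have "\<dots> \<le> (\<Sum>t\<in>grp_supp G g. \<bar>g t\<bar>)" using quot_proj_l1_bound[OF g] .
    finally show ?thesis .
  qed
  then show "\<bar>h (N #> a) - h (N #> (a \<otimes> y))\<bar> \<le> (\<Sum>t\<in>grp_supp G g. \<bar>g t\<bar>) / w"
    unfolding A_def B_def using w(1) by (simp add: pos_le_divide_eq mult.commute)
qed

text \<open>The maximum level set, pulled back to G, is closed under right multiplication by the
  support of f, which generates G.\<close>

lemma constant_if_rhs_vanishes_at_max:
  assumes eqn: "\<forall>c\<in>carrier (G Mod N). phi c = quot_conv G N h (quot_proj G N f) c"
    and c0: "c0 \<in> carrier (G Mod N)" and max: "\<forall>c\<in>carrier (G Mod N). h c \<le> h c0"
    and vanish: "\<forall>c\<in>carrier (G Mod N). h c = h c0 \<longrightarrow> phi c = 0"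
  shows "\<forall>c\<in>carrier (G Mod N). h c = h c0"
proof -
  define A where "A = {a \<in> carrier G. h (N #> a) = h c0}"
  have closed: "a \<otimes> y \<in> A" if a: "a \<in> A" and y: "y \<in> grp_supp G f" for a y
  proof (rule ccontr)
    assume not_max: "a \<otimes> y \<notin> A"
    have a_carr: "a \<in> carrier G" and ha: "h (N #> a) = h c0" using a unfolding A_def by auto
    have y_carr: "y \<in> carrier G" using y supp_subset_carrier[of G] by auto
    have cosets: "N #> a \<in> carrier (G Mod N)" "N #> (a \<otimes> y) \<in> carrier (G Mod N)"
      using a_carr y_carr by (auto simp: carrier_FactGroup)
    have lower: "h (N #> (a \<otimes> y)) < h (N #> a)"
      using not_max max cosets(2) a_carr y_carr ha unfolding A_def by fastforce
    then have moves: "N #> (a \<otimes> y) \<noteq> N #> a" by auto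
    then have "y \<noteq> \<one>" using a_carr by auto
    then have "quot_proj G N f (inv\<^bsub>G Mod N\<^esub> (N #> (a \<otimes> y)) \<otimes>\<^bsub>G Mod N\<^esub> (N #> a)) < 0"
      using kernel_edge[OF a_carr y moves] supp_f_neg[OF y] by linarith
    moreover have "quot_proj G N f (inv\<^bsub>G Mod N\<^esub> (N #> (a \<otimes> y)) \<otimes>\<^bsub>G Mod N\<^esub> (N #> a)) = 0"
    proof (rule group.convolution_max_principle[OF factorgroup_is_group finite_quotient
          kernel_hypotheses(1,3) _ cosets(1) _ cosets(2) lower])
      show "\<forall>c\<in>carrier (G Mod N). h c \<le> h (N #> a)" using max ha by simp
      show "convolution (G Mod N) h (quot_proj G N f) (N #> a) = 0"
        using eqn vanish cosets(1) ha by (simp add: quot_conv_eq_convolution)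
    qed
    ultimately show False by simp
  qed
  obtain a0 where a0: "a0 \<in> carrier G" "c0 = N #> a0" using c0 by (auto simp: carrier_FactGroup)
  have "A = carrier G"
  proof (rule right_closed_subset_eq[OF f_generates supp_subset_carrier])
    show "A \<subseteq> carrier G" "a0 \<in> A" unfolding A_def using a0 by auto
    show "\<And>a y. a \<in> A \<Longrightarrow> y \<in> grp_supp G f \<Longrightarrow> a \<otimes> y \<in> A" by (rule closed)
    show "\<And>a y. a \<in> A \<Longrightarrow> y \<in> grp_supp G f \<Longrightarrow> a \<otimes> inv y \<in> A"
      using closed supp_f_inv by blast
  qed
  then show ?thesis unfolding A_def by (auto simp: carrier_FactGroup)
qed

lemma max_attained_on_support:
  assumes eqn: "\<forall>c\<in>carrier (G Mod N). quot_proj G N g c = quot_conv G N h (quot_proj G N f) c"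
    and c0: "c0 \<in> carrier (G Mod N)" and max: "\<forall>c\<in>carrier (G Mod N). h c \<le> h c0"
    and nonconst: "\<exists>c\<in>carrier (G Mod N). h c \<noteq> h c0"
  shows "\<exists>b\<in>grp_supp G g. h (N #> b) = h c0"
proof -
  obtain c where c: "c \<in> carrier (G Mod N)" "h c = h c0" "quot_proj G N g c \<noteq> 0"
    using constant_if_rhs_vanishes_at_max[OF eqn c0 max] nonconst by blast
  then show ?thesis using quot_proj_nonzero_coset by blast
qed

text \<open>The minimum version, obtained by applying the maximum version to -h and -g.\<close>

lemma min_attained_on_support:
  assumes eqn: "\<forall>c\<in>carrier (G Mod N). quot_proj G N g c = quot_conv G N h (quot_proj G N f) c"
    and c0: "c0 \<in> carrier (G Mod N)" and min: "\<forall>c\<in>carrier (G Mod N). h c0 \<le> h c"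
    and nonconst: "\<exists>c\<in>carrier (G Mod N). h c \<noteq> h c0"
  shows "\<exists>b\<in>grp_supp G g. h (N #> b) = h c0"
proof -
  have "\<forall>c\<in>carrier (G Mod N). quot_proj G N (\<lambda>x. - g x) c
      = quot_conv G N (\<lambda>c. - h c) (quot_proj G N f) c"
    using eqn by (simp add: quot_proj_uminus quot_conv_eq_convolution convolution_uminus)
  then obtain b where "b \<in> grp_supp G (\<lambda>x. - g x)" "- h (N #> b) = - h c0"
    using max_attained_on_support[of "\<lambda>x. - g x" "\<lambda>c. - h c" c0] c0 min nonconst by auto
  then show ?thesis unfolding grp_supp_def by auto
qed

lemma oscillation_bound:
  assumes eqn: "\<forall>c\<in>carrier (G Mod N). quot_proj G N g c = quot_conv G N h (quot_proj G N f) c"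
    and D: "\<forall>b1\<in>grp_supp G g. \<forall>b2\<in>grp_supp G g. h (N #> b1) - h (N #> b2) \<le> D" "0 \<le> D"
  shows "Max (h ` carrier (G Mod N)) - Min (h ` carrier (G Mod N)) \<le> D"
proof -
  let ?Q = "carrier (G Mod N)"
  have fin: "finite (h ` ?Q)" "h ` ?Q \<noteq> {}"
    using finite_quotient monoid.one_closed[OF group.is_monoid[OF factorgroup_is_group]] by auto
  obtain cmax where cmax: "cmax \<in> ?Q" "h cmax = Max (h ` ?Q)" using Max_in[OF fin] by auto
  obtain cmin where cmin: "cmin \<in> ?Q" "h cmin = Min (h ` ?Q)" using Min_in[OF fin] by auto
  have max: "\<forall>c\<in>?Q. h c \<le> h cmax" and min: "\<forall>c\<in>?Q. h cmin \<le> h c"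
    using cmax cmin fin by auto
  show ?thesis
  proof (cases "h cmax = h cmin")
    case True
    then show ?thesis using cmax cmin D(2) by simp
  next
    case False
    obtain b1 where b1: "b1 \<in> grp_supp G g" "h (N #> b1) = h cmax"
      using max_attained_on_support[OF eqn cmax(1) max] cmin(1) False by metis
    obtain b2 where b2: "b2 \<in> grp_supp G g" "h (N #> b2) = h cmin"
      using min_attained_on_support[OF eqn cmin(1) min] cmax(1) False by metis
    show ?thesis using D(1) b1 b2 cmax cmin by fastforce
  qed
qed

end

text \<open>Main result: the oscillation of h is bounded by m L, where L is the Lipschitz constant
  from coset_function_lipschitz and m comes from pairwise_word_length_bound for the
  support of g.\<close>

theorem lemma5p4:
  fixes G :: "('a, 'b) monoid_scheme" and \<Gamma>n :: "nat \<Rightarrow> 'a set"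
    and f g :: "'a \<Rightarrow> real"
  assumes "group G"
    and "finitely_generated G"
    and "infinite (carrier G)"
    and "\<And>n. \<Gamma>n n \<lhd> G"
    and "\<And>n. finite (carrier (G Mod \<Gamma>n n))"
    and "well_balanced G f"
    and "in_group_ring G g"
  shows "\<exists>C>0. \<forall>n. \<forall>h :: 'a set \<Rightarrow> real.
           (\<forall>c\<in>carrier (G Mod \<Gamma>n n).
              quot_proj G (\<Gamma>n n) g c = quot_conv G (\<Gamma>n n) h (quot_proj G (\<Gamma>n n) f) c)
           \<longrightarrow> Max (h ` carrier (G Mod \<Gamma>n n)) - Min (h ` carrier (G Mod \<Gamma>n n)) \<le> C"
proof -
  interpret group G by (rule assms(1))
  note wb = assms(6) and g = assms(7)
  have quotient: "balanced_quotient (\<Gamma>n n) G f" for n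
    using assms(4,5,6) by (simp add: balanced_quotient_def balanced_quotient_axioms_def)
  obtain w where w: "w > 0" "\<forall>y\<in>grp_supp G f. y \<noteq> \<one>\<^bsub>G\<^esub> \<longrightarrow> f y \<le> - w"
    using well_balanced_gap[OF wb] by blast
  define L where "L = (\<Sum>t\<in>grp_supp G g. \<bar>g t\<bar>) / w"
  have L: "0 \<le> L" unfolding L_def using w(1) by (simp add: sum_nonneg)
  obtain m :: nat where m: "\<forall>F L. 0 \<le> L \<longrightarrow> right_lipschitz G (grp_supp G f) L F \<longrightarrow>
      (\<forall>b1\<in>grp_supp G g. \<forall>b2\<in>grp_supp G g. F b1 - F b2 \<le> real m * L)"
    using pairwise_word_length_bound[OF _ supp_subset_carrier well_balanced_generates[OF wb]
        supp_subset_carrier] g unfolding in_group_ring_def by blast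
  show ?thesis
  proof (intro exI[of _ "real m * L + 1"] conjI allI impI)
    show "0 < real m * L + 1" using L by (simp add: add_nonneg_pos)
    fix n and h :: "'a set \<Rightarrow> real"
    assume eqn: "\<forall>c\<in>carrier (G Mod \<Gamma>n n).
      quot_proj G (\<Gamma>n n) g c = quot_conv G (\<Gamma>n n) h (quot_proj G (\<Gamma>n n) f) c"
    interpret Q: balanced_quotient "\<Gamma>n n" G f by (rule quotient)
    have "right_lipschitz G (grp_supp G f) L (\<lambda>a. h (\<Gamma>n n #>\<^bsub>G\<^esub> a))"
      using Q.coset_function_lipschitz[OF g eqn w] unfolding L_def .
    then have "\<forall>b1\<in>grp_supp G g. \<forall>b2\<in>grp_supp G g.
        h (\<Gamma>n n #>\<^bsub>G\<^esub> b1) - h (\<Gamma>n n #>\<^bsub>G\<^esub> b2) \<le> real m * L"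
      using m L by blast
    then show "Max (h ` carrier (G Mod \<Gamma>n n)) - Min (h ` carrier (G Mod \<Gamma>n n)) \<le> real m * L + 1"
      using Q.oscillation_bound[OF eqn _ mult_nonneg_nonneg[OF _ L]] by fastforce
  qed
qed

end
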